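(* Let $(K,v)$ be an extremal valued field with nontrivial valuation, divisible value group $\Gamma$, valuation ring $\mathcal{O}_v$, maximal ideal $\mathfrak{m}_v$, and residue field $k$ which is not algebraically closed. Then there is no polynomial $f(Y,Z)\in\mathcal{O}_v[Y,Z]$ such that both (i) there are $\alpha_1,\dots,\alpha_m\in k$ such that for every $\alpha\in k\setminus\{\alpha_1,\dots,\alpha_m\}$ the equation $\bar f(\alpha,z)=0$ has no solution $z\in k$ (where $\bar f\in k[Y,Z]$ is the reduction of $f$ modulo $\mathfrak{m}_v$), and (ii) for every $\epsilon\in\mathfrak{m}_v$ the equation $f(\epsilon,Z)=0$ has a solution in $\mathcal{O}_v$.
   Context: $(K,v)$ with valuation ring $\mathcal{O}_v$ and value group $\Gamma$ (and $v(0)=\infty$) is extremal if for every $n\ge1$ and every $F\in K[X_1,\dots,X_n]$ the set $\{v(F(a_1,\dots,a_n)) : a_i\in\mathcal{O}_v\}\subseteq\Gamma\cup\{\infty\}$ has a maximal element. *)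

theory Defs
  imports "HOL-Computational_Algebra.Polynomial"
begin

text \<open>A (Krull) valuation on a field, given on nonzero elements; the value at 0
  is junk and is treated as infinity by all definitions below.\<close>
definition valuation :: "('a::field \<Rightarrow> 'g::linordered_ab_group_add) \<Rightarrow> bool" where
  "valuation v \<longleftrightarrow>
     (\<forall>x y. x \<noteq> 0 \<longrightarrow> y \<noteq> 0 \<longrightarrow> v (x * y) = v x + v y) \<and>
     (\<forall>x y. x \<noteq> 0 \<longrightarrow> y \<noteq> 0 \<longrightarrow> x + y \<noteq> 0 \<longrightarrow> min (v x) (v y) \<le> v (x + y))"

definition val_ring :: "('a::field \<Rightarrow> 'g::linordered_ab_group_add) \<Rightarrow> 'a set" where
  "val_ring v = {x. x = 0 \<or> 0 \<le> v x}"

definition max_ideal :: "('a::field \<Rightarrow> 'g::linordered_ab_group_add) \<Rightarrow> 'a set" where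
  "max_ideal v = {x. x = 0 \<or> 0 < v x}"

definition value_group :: "('a::field \<Rightarrow> 'g::linordered_ab_group_add) \<Rightarrow> 'g set" where
  "value_group v = v ` (UNIV - {0})"

definition nontrivial_val :: "('a::field \<Rightarrow> 'g::linordered_ab_group_add) \<Rightarrow> bool" where
  "nontrivial_val v \<longleftrightarrow> (\<exists>x. x \<noteq> 0 \<and> v x \<noteq> 0)"

definition divisible_group :: "'g::linordered_ab_group_add set \<Rightarrow> bool" where
  "divisible_group G \<longleftrightarrow> (\<forall>g\<in>G. \<forall>n::nat. n \<ge> 1 \<longrightarrow> (\<exists>h\<in>G. (\<Sum>_<n. h) = g))"

inductive_set polyfun :: "nat \<Rightarrow> ((nat \<Rightarrow> 'a::comm_ring_1) \<Rightarrow> 'a) set" for n :: nat where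
  const: "(\<lambda>_. c) \<in> polyfun n"
| var: "i < n \<Longrightarrow> (\<lambda>a. a i) \<in> polyfun n"
| add: "F \<in> polyfun n \<Longrightarrow> G \<in> polyfun n \<Longrightarrow> (\<lambda>a. F a + G a) \<in> polyfun n"
| mult: "F \<in> polyfun n \<Longrightarrow> G \<in> polyfun n \<Longrightarrow> (\<lambda>a. F a * G a) \<in> polyfun n"

text \<open>Extremality: for every polynomial F in n \<ge> 1 variables, the set
  of values v(F(a)) for a in O^n, inside Gamma with infinity, has a maximum. The maximum is
  infinity iff F has a zero in O^n.\<close>
definition extremal :: "('a::field \<Rightarrow> 'g::linordered_ab_group_add) \<Rightarrow> bool" where
  "extremal v \<longleftrightarrow>
     (\<forall>n::nat. n \<ge> 1 \<longrightarrow> (\<forall>F \<in> polyfun n.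
        (\<exists>a. (\<forall>i<n. a i \<in> val_ring v) \<and> F a = 0) \<or>
        (\<exists>a. (\<forall>i<n. a i \<in> val_ring v) \<and> F a \<noteq> 0 \<and>
             (\<forall>b. (\<forall>i<n. b i \<in> val_ring v) \<longrightarrow> F b \<noteq> 0 \<longrightarrow> v (F b) \<le> v (F a)))))"

text \<open>res is the residue map O \<rightarrow> k: a surjective ring homomorphism with kernel m,
  so k is (isomorphic to) O/m.\<close>
definition residue_map :: "('a::field \<Rightarrow> 'g::linordered_ab_group_add) \<Rightarrow> ('a \<Rightarrow> 'k::field) \<Rightarrow> bool" where
  "residue_map v res \<longleftrightarrow>
     (\<forall>x\<in>val_ring v. \<forall>y\<in>val_ring v. res (x + y) = res x + res y \<and> res (x * y) = res x * res y) \<and>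
     res 1 = 1 \<and> res ` val_ring v = UNIV \<and>
     (\<forall>x\<in>val_ring v. res x = 0 \<longleftrightarrow> x \<in> max_ideal v)"

definition alg_closed_field :: "'k::field itself \<Rightarrow> bool" where
  "alg_closed_field _ \<longleftrightarrow> (\<forall>p::'k poly. degree p \<ge> 1 \<longrightarrow> (\<exists>x. poly p x = 0))"

definition eval2 :: "(nat \<Rightarrow> nat \<Rightarrow> 'a::comm_ring_1) \<Rightarrow> nat \<Rightarrow> 'a \<Rightarrow> 'a \<Rightarrow> 'a" where
  "eval2 c N y z = (\<Sum>i\<le>N. \<Sum>j\<le>N. c i j * y ^ i * z ^ j)"

end

theory Submission
  imports Defs
begin

text \<open>
  Choose a monic polynomial p over k of degree D \<ge> 1 without roots and lift it to a monic
  g over O; then g(x) is a unit for every x in O, and its homogenisation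
  h(a,b) = \<Sum> g_i a^(D-i) b^i satisfies v(h(a,b)) = D min(v a, v b).
  For s in m \<setminus> 0 put H(x) = h(s,x) and Y_j(x) = u_j s^D / H(x) for two elements u_1, u_2 of O,
  chosen so that for x \<in> s O one of f(Y_j(x),Z) is rootless modulo m.  Clearing
  denominators, E_j(x,z) = H(x)^N f(Y_j(x),z) is a polynomial, and so is
  P(x,z_1,z_2) = h(h(E_1(x,z_1), E_2(x,z_2)), x^(MD)) with M = ND + 1.
  On O^3 the values v(P) stay strictly below K v(s) (K = D M D); extremality gives a
  maximal value \<gamma>, and divisibility of \<Gamma> yields x_0 with \<gamma> < K v(x_0) < K v(s).
  Then Y_j(x_0) \<in> m, so f(Y_j(x_0),Z) has roots z_j, and P(x_0,z_1,z_2) = x_0^K has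
  value K v(x_0) > \<gamma>: a contradiction.
\<close>

subsection \<open>Natural multiples in ordered abelian groups\<close>

text \<open>n-fold sum, the additive counterpart of v(x^n) = n v(x); it matches the sums
  used in the definition of a divisible group.\<close>
definition nsm :: "nat \<Rightarrow> 'g::ab_group_add \<Rightarrow> 'g" where
  "nsm n g = (\<Sum>_<n. g)"

lemma nsm_0 [simp]: "nsm 0 g = 0"
  by (simp add: nsm_def)

lemma nsm_Suc [simp]: "nsm (Suc n) g = g + nsm n g"
  by (simp add: nsm_def add.commute)

lemma nsm_add: "nsm (m + n) g = nsm m g + nsm n g"
  by (induct m) (simp_all add: add.assoc)

lemma nsm_mult: "nsm (m * n) g = nsm m (nsm n g)"
  by (induct m) (simp_all add: nsm_add)

lemma nsm_zero [simp]: "nsm n 0 = 0"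
  by (induct n) simp_all

lemma nsm_mono: "(a::'g::ordered_ab_group_add) \<le> b \<Longrightarrow> nsm n a \<le> nsm n b"
  by (induct n) (simp_all add: add_mono)

lemma nsm_strict_mono: "(a::'g::ordered_ab_group_add) < b \<Longrightarrow> n > 0 \<Longrightarrow> nsm n a < nsm n b"
proof (induct n)
  case (Suc n)
  then show ?case
    by (cases n) (auto intro: add_less_le_mono nsm_mono)
qed simp

lemma nsm_less_iff: "n > 0 \<Longrightarrow> nsm n (a::'g::linordered_ab_group_add) < nsm n b \<longleftrightarrow> a < b"
  by (meson nsm_mono nsm_strict_mono not_le)

lemma nsm_less_count:
  assumes "0 < (a::'g::linordered_ab_group_add)" and "m < n"
  shows "nsm m a < nsm n a"
proof -
  obtain d where "n = m + d" "d > 0"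
    using assms(2) by (metis less_imp_add_positive)
  then show ?thesis
    using nsm_strict_mono[OF assms(1), of d] by (simp add: nsm_add)
qed

lemma midpoint_between:
  fixes a b c :: "'g::linordered_ab_group_add"
  assumes mid: "a + a = b + c" and bc: "b < c"
  shows "b < a \<and> a < c"
proof
  show "b < a"
  proof (rule ccontr)
    assume "\<not> b < a"
    then have "a + a \<le> b + b" by (simp add: add_mono)
    then show False using mid bc by simp
  qed
  show "a < c"
  proof (rule ccontr)
    assume "\<not> a < c"
    then have "c + c \<le> a + a" by (simp add: add_mono)
    then show False using mid bc by simp
  qed
qed

subsection \<open>Valued fields with a residue map\<close>

locale valued_field =
  fixes v :: "'a::field \<Rightarrow> 'g::linordered_ab_group_add" and res :: "'a \<Rightarrow> 'k::field"
  assumes val: "valuation v" and residue: "residue_map v res"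
begin

abbreviation "Ov \<equiv> val_ring v"
abbreviation "Mv \<equiv> max_ideal v"

lemma vmult: "x \<noteq> 0 \<Longrightarrow> y \<noteq> 0 \<Longrightarrow> v (x * y) = v x + v y"
  using val unfolding valuation_def by blast

lemma vadd: "x \<noteq> 0 \<Longrightarrow> y \<noteq> 0 \<Longrightarrow> x + y \<noteq> 0 \<Longrightarrow> min (v x) (v y) \<le> v (x + y)"
  using val unfolding valuation_def by blast

lemma v_one [simp]: "v 1 = 0"
  using vmult[of 1 1] by simp

lemma v_inverse: "x \<noteq> 0 \<Longrightarrow> v (inverse x) = - v x"
  using vmult[of x "inverse x"] by (simp add: eq_neg_iff_add_eq_0 add.commute)

lemma v_divide: "x \<noteq> 0 \<Longrightarrow> y \<noteq> 0 \<Longrightarrow> v (x / y) = v x - v y"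
  by (simp add: divide_inverse vmult v_inverse)

lemma v_minus: "v (- x) = v x"
proof -
  have "v (-1) + v (-1) = 0"
    using vmult[of "-1" "-1"] by simp
  then have "v (-1) = 0"
    by (metis add_neg_neg add_pos_pos less_irrefl linorder_neqE)
  then show ?thesis
    using vmult[of "-1" x] by (cases "x = 0") simp_all
qed

lemma v_power: "x \<noteq> 0 \<Longrightarrow> v (x ^ n) = nsm n (v x)"
  by (induct n) (simp_all add: vmult)

lemma positive_element:
  assumes "nontrivial_val v"
  obtains s where "s \<noteq> 0" and "0 < v s"
proof -
  obtain x where x: "x \<noteq> 0" "v x \<noteq> 0"
    using assms unfolding nontrivial_val_def by blast
  show ?thesis
  proof (cases "0 < v x")
    case False
    then have "0 < v (inverse x)" using x by (simp add: v_inverse)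
    then show ?thesis using that[of "inverse x"] x by simp
  qed (use that x in blast)
qed

lemma O_iff: "x \<in> Ov \<longleftrightarrow> x = 0 \<or> 0 \<le> v x"
  unfolding val_ring_def by simp

lemma M_iff: "x \<in> Mv \<longleftrightarrow> x = 0 \<or> 0 < v x"
  unfolding max_ideal_def by simp

lemma O_0 [simp]: "0 \<in> Ov" and O_1 [simp]: "1 \<in> Ov"
  by (simp_all add: O_iff)

lemma O_add: "x \<in> Ov \<Longrightarrow> y \<in> Ov \<Longrightarrow> x + y \<in> Ov"
  unfolding O_iff by (metis add_0 add_0_right min.bounded_iff order.trans vadd)

lemma O_mult: "x \<in> Ov \<Longrightarrow> y \<in> Ov \<Longrightarrow> x * y \<in> Ov"
  unfolding O_iff by (cases "x = 0"; cases "y = 0") (auto simp: vmult)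

lemma O_minus: "x \<in> Ov \<Longrightarrow> - x \<in> Ov"
  unfolding O_iff by (auto simp: v_minus)

lemma O_diff: "x \<in> Ov \<Longrightarrow> y \<in> Ov \<Longrightarrow> x - y \<in> Ov"
  using O_add O_minus by (metis diff_conv_add_uminus)

lemma M_subset_O: "x \<in> Mv \<Longrightarrow> x \<in> Ov"
  unfolding O_iff M_iff by auto

lemma O_power: "x \<in> Ov \<Longrightarrow> x ^ n \<in> Ov"
  by (induct n) (simp_all add: O_mult)

lemma O_sum: "(\<And>i. i \<in> S \<Longrightarrow> f i \<in> Ov) \<Longrightarrow> sum f S \<in> Ov"
  by (induct S rule: infinite_finite_induct) (simp_all add: O_add)

lemma res_add: "x \<in> Ov \<Longrightarrow> y \<in> Ov \<Longrightarrow> res (x + y) = res x + res y"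
  using residue unfolding residue_map_def by blast

lemma res_mult: "x \<in> Ov \<Longrightarrow> y \<in> Ov \<Longrightarrow> res (x * y) = res x * res y"
  using residue unfolding residue_map_def by blast

lemma res_1 [simp]: "res 1 = 1"
  using residue unfolding residue_map_def by blast

lemma res_eq_0_iff: "x \<in> Ov \<Longrightarrow> res x = 0 \<longleftrightarrow> x \<in> Mv"
  using residue unfolding residue_map_def by blast

lemma res_0 [simp]: "res 0 = 0"
  using res_eq_0_iff[of 0] by (simp add: M_iff)

lemma res_surj: "\<exists>x\<in>Ov. res x = t"
  using residue unfolding residue_map_def by (metis imageE UNIV_I)

lemma res_minus: "x \<in> Ov \<Longrightarrow> res (- x) = - res x"
  using res_add[of x "- x"] O_minus[of x] by (simp add: eq_neg_iff_add_eq_0 add.commute)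

lemma res_power: "x \<in> Ov \<Longrightarrow> res (x ^ n) = res x ^ n"
  by (induct n) (simp_all add: res_mult O_power)

lemma res_sum: "(\<And>i. i \<in> S \<Longrightarrow> f i \<in> Ov) \<Longrightarrow> res (sum f S) = (\<Sum>i\<in>S. res (f i))"
proof (induct S rule: infinite_finite_induct)
  case (insert x F)
  then show ?case by (simp add: res_add O_sum)
qed simp_all

lemma unit_of_res: "x \<in> Ov \<Longrightarrow> res x \<noteq> 0 \<Longrightarrow> x \<noteq> 0 \<and> v x = 0"
  using res_eq_0_iff[of x] unfolding O_iff M_iff by auto

lemma res_of_unit: "x \<noteq> 0 \<Longrightarrow> v x = 0 \<Longrightarrow> x \<in> Ov \<and> res x \<noteq> 0"
  using res_eq_0_iff[of x] unfolding O_iff M_iff by auto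

lemma res_divide_unit:
  assumes x: "x \<in> Ov" and y: "y \<noteq> 0" "v y = 0"
  shows "x / y \<in> Ov \<and> res (x / y) = res x / res y"
proof -
  have q: "x / y \<in> Ov"
    using x y by (cases "x = 0") (auto simp: O_iff v_divide)
  have yO: "y \<in> Ov" "res y \<noteq> 0" using res_of_unit y by auto
  have "res (x / y) * res y = res x" using res_mult[OF q yO(1)] y by simp
  then show ?thesis using q yO by (simp add: field_simps)
qed

lemma eval2_O: "(\<And>i j. c i j \<in> Ov) \<Longrightarrow> y \<in> Ov \<Longrightarrow> z \<in> Ov \<Longrightarrow> eval2 c N y z \<in> Ov"
  unfolding eval2_def by (intro O_sum O_mult O_power) auto

lemma res_eval2: "(\<And>i j. c i j \<in> Ov) \<Longrightarrow> y \<in> Ov \<Longrightarrow> z \<in> Ov \<Longrightarrow>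
   res (eval2 c N y z) = eval2 (\<lambda>i j. res (c i j)) N (res y) (res z)"
  unfolding eval2_def by (simp add: res_sum O_sum O_mult O_power res_mult res_power)

end

subsection \<open>Binary forms and their dehomogenisations\<close>

definition hf :: "(nat \<Rightarrow> 'a::field) \<Rightarrow> nat \<Rightarrow> 'a \<Rightarrow> 'a \<Rightarrow> 'a" where
  "hf g D a b = (\<Sum>i\<le>D. g i * a ^ (D - i) * b ^ i)"

definition gp :: "(nat \<Rightarrow> 'a::field) \<Rightarrow> nat \<Rightarrow> 'a \<Rightarrow> 'a" where
  "gp g D x = (\<Sum>i\<le>D. g i * x ^ i)"

lemma hf_dehom_left: "(a::'a::field) \<noteq> 0 \<Longrightarrow> hf g D a b = a ^ D * gp g D (b / a)"
  unfolding hf_def gp_def sum_distrib_left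
proof (rule sum.cong)
  fix i assume a: "a \<noteq> 0" and i: "i \<in> {..D}"
  then have "a ^ D = a ^ (D - i) * a ^ i" by (simp add: power_add[symmetric])
  then show "g i * a ^ (D - i) * b ^ i = a ^ D * (g i * (b / a) ^ i)"
    using a by (simp add: power_divide field_simps)
qed simp

lemma hf_dehom_right: "(b::'a::field) \<noteq> 0 \<Longrightarrow> hf g D a b = b ^ D * (\<Sum>i\<le>D. g i * (a / b) ^ (D - i))"
  unfolding hf_def sum_distrib_left
proof (rule sum.cong)
  fix i assume b: "b \<noteq> 0" and i: "i \<in> {..D}"
  then have "b ^ D = b ^ (D - i) * b ^ i" by (simp add: power_add[symmetric])
  then show "g i * a ^ (D - i) * b ^ i = b ^ D * (g i * (a / b) ^ (D - i))"
    using b by (simp add: power_divide field_simps)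
qed simp

lemma hf_0_0: "D \<ge> 1 \<Longrightarrow> hf g D 0 0 = (0::'a::field)"
  unfolding hf_def by (rule sum.neutral) (auto simp: power_0_left)

lemma hf_0_left: "g D = 1 \<Longrightarrow> hf g D 0 b = (b::'a::field) ^ D"
proof -
  assume gD: "g D = 1"
  have "hf g D 0 b = (\<Sum>i\<le>D. if i = D then b ^ D else 0)"
    unfolding hf_def by (rule sum.cong) (auto simp: gD power_0_left)
  then show ?thesis by simp
qed

lemma polyfun_power: "F \<in> polyfun n \<Longrightarrow> (\<lambda>a. F a ^ k) \<in> polyfun n"
proof (induct k)
  case 0
  then show ?case using polyfun.const[of 1 n] by simp
next
  case (Suc k)
  then show ?case using polyfun.mult[of F n "\<lambda>a. F a ^ k"] by simp
qed

lemma polyfun_sum: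
  "finite S \<Longrightarrow> (\<And>i. i \<in> S \<Longrightarrow> F i \<in> polyfun n) \<Longrightarrow> (\<lambda>a. \<Sum>i\<in>S. F i a) \<in> polyfun n"
proof (induct S rule: finite_induct)
  case empty
  then show ?case using polyfun.const[of 0 n] by simp
next
  case (insert x S)
  then show ?case using polyfun.add[of "F x" n "\<lambda>a. \<Sum>i\<in>S. F i a"] by simp
qed

lemma polyfun_hf:
  "A \<in> polyfun n \<Longrightarrow> B \<in> polyfun n \<Longrightarrow> (\<lambda>a. hf g D (A a) (B a)) \<in> polyfun n"
  unfolding hf_def by (intro polyfun_sum polyfun.mult polyfun_power polyfun.const) auto

subsection \<open>Forms lifting a rootless monic polynomial\<close>

text \<open>g is monic of degree D \<ge> 1 over O and g(x) is a unit for all x in O; this holds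
  for any monic lift of a monic polynomial without roots in the residue field.\<close>
locale unit_form = valued_field v res
  for v :: "'a::field \<Rightarrow> 'g::linordered_ab_group_add" and res :: "'a \<Rightarrow> 'k::field" +
  fixes g :: "nat \<Rightarrow> 'a" and D :: nat
  assumes g_O: "\<And>i. g i \<in> val_ring v" and g_monic: "g D = 1" and D_pos: "D \<ge> 1"
    and gp_unit: "\<And>x. x \<in> val_ring v \<Longrightarrow> gp g D x \<noteq> 0 \<and> v (gp g D x) = 0"
begin

lemma hf_O: "a \<in> Ov \<Longrightarrow> b \<in> Ov \<Longrightarrow> hf g D a b \<in> Ov"
  unfolding hf_def using g_O by (intro O_sum O_mult O_power) auto

text \<open>The reversed polynomial \<Sum> g_i x^(D-i) has residue 1 on m, so it is a unit there.\<close>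
lemma reversed_unit:
  assumes x: "x \<in> Mv"
  shows "(\<Sum>i\<le>D. g i * x ^ (D - i)) \<noteq> 0 \<and> v (\<Sum>i\<le>D. g i * x ^ (D - i)) = 0"
proof -
  have xO: "x \<in> Ov" using M_subset_O x .
  have "res (\<Sum>i\<le>D. g i * x ^ (D - i)) = (\<Sum>i\<le>D. res (g i) * res x ^ (D - i))"
    using xO g_O by (simp add: res_sum O_mult O_power res_mult res_power)
  also have "\<dots> = (\<Sum>i\<le>D. if i = D then 1 else 0)"
    using res_eq_0_iff[OF xO] x g_monic by (intro sum.cong) (auto simp: power_0_left)
  finally have "res (\<Sum>i\<le>D. g i * x ^ (D - i)) = 1" by simp
  then show ?thesis
    using unit_of_res[of "\<Sum>i\<le>D. g i * x ^ (D - i)"] xO g_O by (auto intro!: O_sum O_mult O_power)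
qed

text \<open>The form is anisotropic with v(h(a,b)) = D min(v a, v b); we record the two
  upper bounds and the exact value used below.\<close>
lemma hf_value_left:
  assumes a: "a \<noteq> 0" and ba: "b / a \<in> Ov"
  shows "hf g D a b \<noteq> 0 \<and> v (hf g D a b) = nsm D (v a)"
  using hf_dehom_left[OF a] gp_unit[OF ba] a by (simp add: vmult v_power)

lemma hf_value_right:
  assumes b: "b \<noteq> 0" and ab: "a / b \<in> Mv"
  shows "hf g D a b \<noteq> 0 \<and> v (hf g D a b) = nsm D (v b)"
  using hf_dehom_right[OF b] reversed_unit[OF ab] b by (simp add: vmult v_power)

lemma hf_bound_left:
  assumes a: "a \<noteq> 0"
  shows "hf g D a b \<noteq> 0 \<and> v (hf g D a b) \<le> nsm D (v a)"
proof (cases "b / a \<in> Ov")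
  case False
  then have b: "b \<noteq> 0" using a by auto
  then have "v b < v a" using False a by (simp add: O_iff v_divide)
  then have "a / b \<in> Mv" and "nsm D (v b) \<le> nsm D (v a)"
    using a b by (simp_all add: M_iff v_divide nsm_mono)
  then show ?thesis using hf_value_right[OF b] by simp
qed (use hf_value_left[OF a] in simp)

lemma hf_bound_right:
  assumes b: "b \<noteq> 0"
  shows "hf g D a b \<noteq> 0 \<and> v (hf g D a b) \<le> nsm D (v b)"
proof (cases "a / b \<in> Mv")
  case False
  then have a: "a \<noteq> 0" using b by (auto simp: M_iff)
  then have "v a \<le> v b" using False b by (simp add: M_iff v_divide)
  then have "b / a \<in> Ov" and "nsm D (v a) \<le> nsm D (v b)"
    using a b by (simp_all add: O_iff v_divide nsm_mono)
  then show ?thesis using hf_value_left[OF a] by simp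
qed (use hf_value_right[OF b] in simp)

end

lemma (in valued_field) unit_form_lift:
  fixes p :: "'k poly"
  assumes monic: "lead_coeff p = 1" and deg: "degree p \<ge> 1" and rootless: "\<And>t. poly p t \<noteq> 0"
  obtains g where "unit_form v res g (degree p)"
    and "\<And>b. b \<in> Ov \<Longrightarrow> res (gp g (degree p) b) = poly p (res b)"
proof -
  define D where "D = degree p"
  define g where "g i = (if i = D then 1 else SOME x. x \<in> Ov \<and> res x = coeff p i)" for i
  have g: "g i \<in> Ov \<and> res (g i) = coeff p i" for i
  proof (cases "i = D")
    case False
    have "\<exists>x. x \<in> Ov \<and> res x = coeff p i" using res_surj by blast
    from someI_ex[OF this] show ?thesis using False by (simp add: g_def)
  qed (use monic in \<open>simp add: g_def D_def\<close>)
  have res_gp: "res (gp g D b) = poly p (res b)" if b: "b \<in> Ov" for b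
  proof -
    have "res (gp g D b) = (\<Sum>i\<le>D. res (g i) * res b ^ i)"
      unfolding gp_def using g b by (simp add: res_sum O_sum O_mult O_power res_mult res_power)
    also have "\<dots> = poly p (res b)" using g by (simp add: poly_altdef D_def)
    finally show ?thesis .
  qed
  have "gp g D b \<noteq> 0 \<and> v (gp g D b) = 0" if b: "b \<in> Ov" for b
  proof -
    have "gp g D b \<in> Ov" unfolding gp_def using g b by (intro O_sum O_mult O_power) auto
    then show ?thesis using res_gp[OF b] rootless unit_of_res by metis
  qed
  then have "unit_form v res g D"
    using g deg by unfold_locales (simp_all add: g_def D_def)
  with res_gp show ?thesis using that unfolding D_def by blast
qed

text \<open>Divisibility of \<Gamma> places the value of an element strictly between v(y) and
  K v(s): take a (2K)-th root of v(y s^K).\<close>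
lemma (in valued_field) value_between:
  assumes dv: "divisible_group (value_group v)"
    and y: "y \<noteq> 0" and s: "s \<noteq> 0" and K: "K > 0" and less: "v y < nsm K (v s)"
  obtains x where "x \<noteq> 0" and "v y < nsm K (v x)" and "v x < v s"
proof -
  have "v (y * s ^ K) \<in> value_group v"
    using y s by (simp add: value_group_def)
  moreover have "v (y * s ^ K) = v y + nsm K (v s)"
    using y s by (simp add: vmult v_power)
  moreover have "K + K \<ge> 1" using K by simp
  ultimately obtain \<rho> where \<rho>: "\<rho> \<in> value_group v" "nsm (K + K) \<rho> = v y + nsm K (v s)"
    using dv unfolding divisible_group_def nsm_def by fastforce
  then have "nsm K \<rho> + nsm K \<rho> = v y + nsm K (v s)"
    by (simp add: nsm_add)
  then have "v y < nsm K \<rho> \<and> nsm K \<rho> < nsm K (v s)"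
    using midpoint_between less by blast
  moreover obtain x where "x \<noteq> 0" "v x = \<rho>"
    using \<rho>(1) unfolding value_group_def by auto
  ultimately show ?thesis
    using that K by (simp add: nsm_less_iff)
qed

subsection \<open>Clearing denominators: the polynomial P\<close>

locale clearing = unit_form v res g D
  for v :: "'a::field \<Rightarrow> 'g::linordered_ab_group_add" and res :: "'a \<Rightarrow> 'k::field"
    and g :: "nat \<Rightarrow> 'a" and D :: nat +
  fixes s :: 'a and u :: "nat \<Rightarrow> 'a" and c :: "nat \<Rightarrow> nat \<Rightarrow> 'a" and N :: nat
  assumes s_nonzero: "s \<noteq> 0" and s_positive: "0 < v s"
    and u_O: "\<And>j. u j \<in> val_ring v" and c_O: "\<And>i l. c i l \<in> val_ring v"
    and rootless_residue: "\<And>\<beta>. \<beta> \<in> val_ring v \<Longrightarrow>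
      \<exists>j\<in>{1,2}. \<forall>\<zeta>. eval2 (\<lambda>i l. res (c i l)) N (res (u j) / res (gp g D \<beta>)) \<zeta> \<noteq> 0"
begin

text \<open>H(x) = h(s,x), E_j(x,z) = H(x)^N f(u_j s^D / H(x), z) written without division,
  and P(x,z_1,z_2) = h(h(E_1(x,z_1), E_2(x,z_2)), x^((ND+1)D)), of degree K in x.\<close>
definition H :: "'a \<Rightarrow> 'a" where
  "H x = hf g D s x"

definition E :: "nat \<Rightarrow> 'a \<Rightarrow> 'a \<Rightarrow> 'a" where
  "E j x z = (\<Sum>i\<le>N. \<Sum>l\<le>N. c i l * u j ^ i * s ^ (D * i) * H x ^ (N - i) * z ^ l)"

definition K :: nat where
  "K = D * ((N * D + 1) * D)"

definition P :: "(nat \<Rightarrow> 'a) \<Rightarrow> 'a" where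
  "P a = hf g D (hf g D (E 1 (a 0) (a 1)) (E 2 (a 0) (a 2))) (a 0 ^ ((N * D + 1) * D))"

lemma K_pos: "K > 0"
  using D_pos by (simp add: K_def)

lemma H_nonzero: "H x \<noteq> 0"
  using hf_bound_left[OF s_nonzero] by (simp add: H_def)

lemma E_eq: "E j x z = H x ^ N * eval2 c N (u j * s ^ D / H x) z"
  unfolding E_def eval2_def sum_distrib_left
proof (intro sum.cong refl)
  fix i l assume i: "i \<in> {..N}"
  have "H x ^ N = H x ^ (N - i) * H x ^ i" using i by (simp add: power_add[symmetric])
  moreover have "(u j * s ^ D / H x) ^ i = u j ^ i * s ^ (D * i) / H x ^ i"
    by (simp add: power_divide power_mult_distrib power_mult)
  ultimately show "c i l * u j ^ i * s ^ (D * i) * H x ^ (N - i) * z ^ l =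
      H x ^ N * (c i l * (u j * s ^ D / H x) ^ i * z ^ l)"
    using H_nonzero[of x] by (simp add: field_simps power_mult)
qed

lemma P_O: "(\<forall>i<3. a i \<in> Ov) \<Longrightarrow> P a \<in> Ov"
  unfolding P_def E_def H_def using s_positive u_O c_O
  by (intro hf_O O_sum O_mult O_power) (auto simp: O_iff)

lemma P_polyfun: "P \<in> polyfun 3"
proof -
  have H: "(\<lambda>a. H (a 0)) \<in> polyfun 3"
    unfolding H_def by (rule polyfun_hf[OF polyfun.const polyfun.var]) simp
  have E: "(\<lambda>a. E j (a 0) (a j)) \<in> polyfun 3" if j: "j < 3" for j
    unfolding E_def
    by (intro polyfun_sum finite_atMost polyfun.mult polyfun.const polyfun_power H
        polyfun.var[OF j])
  show ?thesis
    unfolding P_def[abs_def]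
    by (rule polyfun_hf[OF polyfun_hf[OF E E] polyfun_power[OF polyfun.var]]) simp_all
qed

text \<open>For x \<in> sO one of the E_j(x, \<cdot>) takes only values of exact value ND v(s) on O:
  then H(x) = s^D g(x/s) and f(u_j / g(x/s), z) is a unit for the rootless index j.\<close>
lemma E_value_far:
  assumes x: "x / s \<in> Ov"
  shows "\<exists>j\<in>{1,2}. \<forall>z\<in>Ov. E j x z \<noteq> 0 \<and> v (E j x z) = nsm (N * D) (v s)"
proof -
  define \<beta> where "\<beta> = x / s"
  have gp\<beta>: "gp g D \<beta> \<noteq> 0" "v (gp g D \<beta>) = 0" using gp_unit x by (auto simp: \<beta>_def)
  have H: "H x = s ^ D * gp g D \<beta>"
    unfolding H_def \<beta>_def using hf_dehom_left[OF s_nonzero] by simp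
  obtain j where j: "j \<in> {1,2}"
    and no_root: "\<And>\<zeta>. eval2 (\<lambda>i l. res (c i l)) N (res (u j) / res (gp g D \<beta>)) \<zeta> \<noteq> 0"
    using rootless_residue[OF x] unfolding \<beta>_def by blast
  define Y where "Y = u j / gp g D \<beta>"
  have Y: "Y \<in> Ov" "res Y = res (u j) / res (gp g D \<beta>)"
    using res_divide_unit[OF u_O gp\<beta>] by (simp_all add: Y_def)
  have "E j x z \<noteq> 0 \<and> v (E j x z) = nsm (N * D) (v s)" if z: "z \<in> Ov" for z
  proof -
    have "res (eval2 c N Y z) \<noteq> 0"
      using res_eval2[OF c_O Y(1) z] no_root Y(2) by simp
    then have f: "eval2 c N Y z \<noteq> 0" "v (eval2 c N Y z) = 0"
      using unit_of_res[OF eval2_O[OF c_O Y(1) z]] by auto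
    have "u j * s ^ D / H x = Y" using H s_nonzero gp\<beta> by (simp add: Y_def)
    then have "E j x z = (s ^ D * gp g D \<beta>) ^ N * eval2 c N Y z" using E_eq H by simp
    then show ?thesis
      using f gp\<beta> s_nonzero by (simp add: vmult v_power nsm_mult)
  qed
  then show ?thesis using j by blast
qed

lemma P_bound:
  assumes a: "\<forall>i<3. a i \<in> Ov"
  shows "P a \<noteq> 0 \<and> v (P a) < nsm K (v s)"
proof (cases "a 0 \<noteq> 0 \<and> v (a 0) < v s")
  case True
  then have "P a \<noteq> 0 \<and> v (P a) \<le> nsm D (v (a 0 ^ ((N * D + 1) * D)))"
    unfolding P_def by (intro hf_bound_right) simp
  moreover have "nsm D (v (a 0 ^ ((N * D + 1) * D))) = nsm K (v (a 0))"
    using True by (simp add: v_power K_def nsm_mult)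
  moreover have "nsm K (v (a 0)) < nsm K (v s)"
    using True K_pos by (simp add: nsm_less_iff)
  ultimately show ?thesis
    by auto
next
  case False
  define x where "x = a 0"
  have "x / s \<in> Ov"
    using False s_nonzero s_positive a by (cases "x = 0") (auto simp: x_def O_iff v_divide)
  then obtain j where j: "j \<in> {1,2}"
    and E_far: "\<forall>z\<in>Ov. E j x z \<noteq> 0 \<and> v (E j x z) = nsm (N * D) (v s)"
    using E_value_far by blast
  have "a j \<in> Ov" using a j by auto
  then have Ej: "E j x (a j) \<noteq> 0" "v (E j x (a j)) = nsm (N * D) (v s)"
    using E_far by auto
  define I where "I = hf g D (E 1 x (a 1)) (E 2 x (a 2))"
  have I: "I \<noteq> 0 \<and> v I \<le> nsm D (nsm (N * D) (v s))"
    using j hf_bound_left[of "E 1 x (a 1)" "E 2 x (a 2)"]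
      hf_bound_right[of "E 2 x (a 2)" "E 1 x (a 1)"] Ej by (auto simp: I_def)
  have "P a \<noteq> 0 \<and> v (P a) \<le> nsm D (v I)"
    unfolding P_def I_def x_def[symmetric] using hf_bound_left I by (simp add: I_def)
  moreover have "nsm D (v I) \<le> nsm (D * (D * (N * D))) (v s)"
    using I by (simp add: nsm_mult nsm_mono)
  moreover have "nsm (D * (D * (N * D))) (v s) < nsm K (v s)"
    using D_pos by (intro nsm_less_count[OF s_positive]) (simp add: K_def algebra_simps)
  ultimately show ?thesis
    by (meson order.trans order_le_less_trans)
qed

text \<open>Close to 0 (v(x) < v(s)) the arguments u_j s^D / H(x) lie in m, so the hypothesis
  on f(\<epsilon>, Z) provides zeros of E_j(x, \<cdot>).\<close>
lemma E_root_near_zero: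
  assumes roots: "\<forall>\<epsilon>\<in>Mv. \<exists>z\<in>Ov. eval2 c N \<epsilon> z = 0"
    and x: "x \<noteq> 0" "v x < v s"
  obtains z where "z \<in> Ov" and "E j x z = 0"
proof -
  have "u j * s ^ D / H x \<in> Mv"
  proof (cases "u j = 0")
    case False
    have "v (H x) \<le> nsm D (v x)"
      using hf_bound_right[OF x(1)] by (simp add: H_def)
    also have "\<dots> < nsm D (v s)"
      using x D_pos by (simp add: nsm_less_iff)
    also have "\<dots> \<le> v (u j) + nsm D (v s)"
      using u_O[of j] False by (simp add: O_iff)
    finally show ?thesis
      using False s_nonzero H_nonzero[of x] by (simp add: M_iff v_divide vmult v_power)
  qed (simp add: M_iff)
  then show ?thesis
    using roots that E_eq by (metis mult_zero_right)
qed

lemma P_at_roots: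
  assumes "E 1 x z\<^sub>1 = 0" and "E 2 x z\<^sub>2 = 0"
  shows "P (\<lambda>i. if i = 0 then x else if i = 1 then z\<^sub>1 else z\<^sub>2) = x ^ K"
proof -
  have "hf g D (E 1 x z\<^sub>1) (E 2 x z\<^sub>2) = 0"
    using assms D_pos by (simp add: hf_0_0)
  then have "P (\<lambda>i. if i = 0 then x else if i = 1 then z\<^sub>1 else z\<^sub>2) = (x ^ ((N * D + 1) * D)) ^ D"
    by (simp add: P_def hf_0_left g_monic)
  also have "\<dots> = x ^ K"
    by (simp add: K_def power_mult[symmetric] mult.commute)
  finally show ?thesis .
qed

theorem extremality_violated:
  assumes ext: "extremal v" and dv: "divisible_group (value_group v)"
    and roots: "\<forall>\<epsilon>\<in>Mv. \<exists>z\<in>Ov. eval2 c N \<epsilon> z = 0"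
  shows False
proof -
  obtain a where a: "\<forall>i<3. a i \<in> Ov"
    and max: "\<And>b. \<forall>i<3. b i \<in> Ov \<Longrightarrow> P b \<noteq> 0 \<Longrightarrow> v (P b) \<le> v (P a)"
    using ext[unfolded extremal_def, rule_format, of 3 P] P_polyfun P_bound by auto
  have Pa: "P a \<noteq> 0" "v (P a) < nsm K (v s)"
    using P_bound[OF a] by auto
  obtain x where x: "x \<noteq> 0" "v (P a) < nsm K (v x)" "v x < v s"
    using value_between[OF dv Pa(1) s_nonzero K_pos Pa(2)] .
  have "0 < nsm K (v x)"
    using x(2) P_O[OF a] Pa(1) by (simp add: O_iff)
  then have "x \<in> Ov"
    using x(1) K_pos nsm_less_iff[of K 0 "v x"] by (simp add: O_iff)
  obtain z\<^sub>1 z\<^sub>2 where z: "z\<^sub>1 \<in> Ov" "E 1 x z\<^sub>1 = 0" "z\<^sub>2 \<in> Ov" "E 2 x z\<^sub>2 = 0"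
    using E_root_near_zero[OF roots x(1,3)] by metis
  define b where "b i = (if i = 0 then x else if i = 1 then z\<^sub>1 else z\<^sub>2)" for i :: nat
  have "P b = x ^ K"
    unfolding b_def using P_at_roots[OF z(2,4)] .
  then have "v (P a) < v (P b)"
    using x by (simp add: v_power)
  moreover have "\<forall>i<3. b i \<in> Ov"
    using \<open>x \<in> Ov\<close> z by (simp add: b_def)
  ultimately show False
    using max \<open>P b = x ^ K\<close> x(1) by (metis not_le power_not_zero)
qed

end

subsection \<open>Choosing the rootless polynomial and the elements u_1, u_2\<close>

lemma (in valued_field) rootless_pattern_impossible:
  fixes p :: "'k poly" and u :: "nat \<Rightarrow> 'a" and c :: "nat \<Rightarrow> nat \<Rightarrow> 'a"
  assumes ext: "extremal v" and dv: "divisible_group (value_group v)"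
    and nontrivial: "nontrivial_val v"
    and monic: "lead_coeff p = 1" and deg: "degree p \<ge> 1" and rootless: "\<And>t. poly p t \<noteq> 0"
    and u: "\<And>j. u j \<in> Ov" and c: "\<And>i l. c i l \<in> Ov"
    and roots: "\<forall>\<epsilon>\<in>Mv. \<exists>z\<in>Ov. eval2 c N \<epsilon> z = 0"
    and pattern: "\<And>t. t \<in> range (poly p) \<Longrightarrow>
      \<exists>j\<in>{1,2}. \<forall>\<zeta>. eval2 (\<lambda>i l. res (c i l)) N (res (u j) / t) \<zeta> \<noteq> 0"
  shows False
proof -
  obtain s where s: "s \<noteq> 0" "0 < v s"
    using positive_element[OF nontrivial] .
  obtain g where g: "unit_form v res g (degree p)"
    and res_gp: "\<And>b. b \<in> Ov \<Longrightarrow> res (gp g (degree p) b) = poly p (res b)"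
    using unit_form_lift[OF monic deg rootless] by blast
  have "\<exists>j\<in>{1,2}. \<forall>\<zeta>. eval2 (\<lambda>i l. res (c i l)) N (res (u j) / res (gp g (degree p) \<beta>)) \<zeta> \<noteq> 0"
    if "\<beta> \<in> Ov" for \<beta>
    using pattern[OF rangeI[of "poly p" "res \<beta>"]] res_gp[OF that] by simp
  then interpret clearing v res g "degree p" s u c N
    using g s u c by (intro clearing.intro clearing_axioms.intro) auto
  show False
    using extremality_violated[OF ext dv roots] .
qed

text \<open>The coefficients of f(Y,Z) = YZ - Z - 1, which has the root 1/(\<epsilon>-1) for
  \<epsilon> in m but none modulo m at Y = 1.\<close>
definition hyperbola :: "nat \<Rightarrow> nat \<Rightarrow> 'a::comm_ring_1" where
  "hyperbola i l = (if i = 1 \<and> l = 1 then 1 else if i = 0 then -1 else 0)"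

lemma eval2_hyperbola: "eval2 hyperbola 1 y z = y * z - z - (1::'a::comm_ring_1)"
  by (simp add: eval2_def hyperbola_def atMost_Suc)

text \<open>An extremal field with nontrivial divisible value group has infinite residue field:
  for finite k the polynomial 1 + \<Prod>(X - t) is constantly 1 on k, and YZ - Z - 1
  satisfies the hypotheses of the contradiction with u_1 = u_2 = 1.\<close>
lemma (in valued_field) residue_field_infinite:
  assumes ext: "extremal v" and dv: "divisible_group (value_group v)"
    and nontrivial: "nontrivial_val v"
  shows "infinite (UNIV :: 'k set)"
proof
  assume fin: "finite (UNIV :: 'k set)"
  define Q :: "'k poly" where "Q = (\<Prod>t\<in>UNIV. [:- t, 1:])"
  have card: "card (UNIV :: 'k set) \<ge> 1"
    using fin by (simp add: Suc_le_eq card_gt_0_iff)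
  have deg_Q: "degree Q = card (UNIV :: 'k set)"
    unfolding Q_def by (subst degree_prod_eq_sum_degree) auto
  have deg: "degree (1 + Q) = degree Q"
    using deg_Q card by (intro degree_add_eq_right) simp
  have "lead_coeff Q = 1"
    unfolding Q_def by (simp add: lead_coeff_prod)
  then have monic: "lead_coeff (1 + Q) = 1"
    using deg deg_Q card by simp
  have one: "poly (1 + Q) t = 1" for t
    using fin by (simp add: Q_def poly_prod)
  have res_hyperbola: "(\<lambda>i l. res (hyperbola i l)) = hyperbola"
    by (auto simp: fun_eq_iff hyperbola_def res_minus)
  have "\<exists>z\<in>Ov. eval2 hyperbola 1 \<epsilon> z = 0" if \<epsilon>: "\<epsilon> \<in> Mv" for \<epsilon>
  proof -
    have \<epsilon>O: "\<epsilon> - 1 \<in> Ov" using M_subset_O[OF \<epsilon>] by (simp add: O_diff)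
    have "res (\<epsilon> - 1) = -1"
      using res_add[OF M_subset_O[OF \<epsilon>], of "-1"] res_eq_0_iff[OF M_subset_O[OF \<epsilon>]] \<epsilon>
      by (simp add: O_minus res_minus)
    then have unit: "\<epsilon> - 1 \<noteq> 0" "v (\<epsilon> - 1) = 0" using unit_of_res[OF \<epsilon>O] by auto
    have "eval2 hyperbola 1 \<epsilon> (1 / (\<epsilon> - 1)) = (\<epsilon> - 1) * (1 / (\<epsilon> - 1)) - 1"
      unfolding eval2_hyperbola by (simp only: left_diff_distrib mult_1_left)
    also have "\<dots> = 0"
      using unit(1) by simp
    finally have "eval2 hyperbola 1 \<epsilon> (1 / (\<epsilon> - 1)) = 0" .
    then show ?thesis using res_divide_unit[OF O_1 unit] by blast
  qed
  then show False
  proof (intro rootless_pattern_impossible[OF ext dv nontrivial monic, of "\<lambda>_. 1" hyperbola 1] ballI)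
    show "degree (1 + Q) \<ge> 1" using deg deg_Q card by simp
    show "poly (1 + Q) t \<noteq> 0" for t using one by simp
    show "hyperbola i l \<in> Ov" for i l by (simp add: hyperbola_def O_minus)
    show "\<exists>j\<in>{1,2}. \<forall>\<zeta>. eval2 (\<lambda>i l. res (hyperbola i l)) 1 (res ((\<lambda>_. 1) j) / t) \<zeta> \<noteq> 0"
      if "t \<in> range (poly (1 + Q))" for t
      using that one unfolding res_hyperbola eval2_hyperbola by auto
  qed simp_all
qed

text \<open>Over an infinite field, a finite set A cannot contain both 1/t and \<kappa>/t for any t,
  once \<kappa> avoids the finitely many quotients of elements of A.\<close>
lemma avoid_quotients:
  fixes A :: "'k::field set"
  assumes "finite A" and "infinite (UNIV :: 'k set)"
  obtains \<kappa> where "\<And>t. t \<noteq> 0 \<Longrightarrow> 1 / t \<notin> A \<or> \<kappa> / t \<notin> A"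
proof -
  have "finite ((\<lambda>(a, b). a / b) ` (A \<times> A))"
    using assms(1) by simp
  then obtain \<kappa> where \<kappa>: "\<kappa> \<notin> (\<lambda>(a, b). a / b) ` (A \<times> A)"
    using ex_new_if_finite[OF assms(2)] by blast
  have "1 / t \<notin> A \<or> \<kappa> / t \<notin> A" if t: "t \<noteq> 0" for t
  proof (rule ccontr)
    assume "\<not> ?thesis"
    then have "(\<kappa> / t, 1 / t) \<in> A \<times> A" by simp
    then have "(\<lambda>(a, b). a / b) (\<kappa> / t, 1 / t) \<in> (\<lambda>(a, b). a / b) ` (A \<times> A)"
      by (rule imageI)
    then show False using \<kappa> t by simp
  qed
  then show ?thesis using that by blast
qed

lemma monic_rootless_poly:
  assumes "\<not> alg_closed_field TYPE('k::field)"
  obtains p :: "'k::field poly" where "lead_coeff p = 1" "degree p \<ge> 1" "\<And>t. poly p t \<noteq> 0"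
proof -
  obtain q :: "'k poly" where q: "degree q \<ge> 1" "\<And>t. poly q t \<noteq> 0"
    using assms unfolding alg_closed_field_def by blast
  then have "q \<noteq> 0" by auto
  then show ?thesis
    using that[of "smult (inverse (lead_coeff q)) q"] q by (simp add: lead_coeff_smult)
qed

theorem proposition3p7:
  fixes v :: "'a::field \<Rightarrow> 'g::linordered_ab_group_add"
    and res :: "'a \<Rightarrow> 'k::field"
  assumes "valuation v"
    and "extremal v"
    and "nontrivial_val v"
    and "divisible_group (value_group v)"
    and "residue_map v res"
    and "\<not> alg_closed_field TYPE('k)"
  shows "\<not> (\<exists>(c :: nat \<Rightarrow> nat \<Rightarrow> 'a) (N :: nat).
            (\<forall>i j. c i j \<in> val_ring v) \<and>
            (\<exists>A :: 'k set. finite A \<and>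
               (\<forall>\<alpha>. \<alpha> \<notin> A \<longrightarrow> (\<forall>z. eval2 (\<lambda>i j. res (c i j)) N \<alpha> z \<noteq> 0))) \<and>
            (\<forall>\<epsilon> \<in> max_ideal v. \<exists>z \<in> val_ring v. eval2 c N \<epsilon> z = 0))"
proof
  interpret valued_field v res
    using assms(1,5) by unfold_locales
  assume "\<exists>c N. (\<forall>i j. c i j \<in> Ov) \<and>
            (\<exists>A. finite A \<and> (\<forall>\<alpha>. \<alpha> \<notin> A \<longrightarrow> (\<forall>z. eval2 (\<lambda>i j. res (c i j)) N \<alpha> z \<noteq> 0))) \<and>
            (\<forall>\<epsilon>\<in>Mv. \<exists>z\<in>Ov. eval2 c N \<epsilon> z = 0)"
  then obtain c N A where c: "\<And>i j. c i j \<in> Ov" and A: "finite A"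
    and rootless_off_A: "\<And>\<alpha> z. \<alpha> \<notin> A \<Longrightarrow> eval2 (\<lambda>i j. res (c i j)) N \<alpha> z \<noteq> 0"
    and roots: "\<forall>\<epsilon>\<in>Mv. \<exists>z\<in>Ov. eval2 c N \<epsilon> z = 0"
    by blast
  obtain p :: "'k poly" where p: "lead_coeff p = 1" "degree p \<ge> 1" "\<And>t. poly p t \<noteq> 0"
    using monic_rootless_poly[OF assms(6)] by blast
  obtain \<kappa> where \<kappa>: "\<And>t. t \<noteq> 0 \<Longrightarrow> 1 / t \<notin> A \<or> \<kappa> / t \<notin> A"
    using avoid_quotients[OF A residue_field_infinite[OF assms(2,4,3)]] by blast
  obtain w where w: "w \<in> Ov" "res w = \<kappa>"
    using res_surj by blast
  define u where "u j = (if j = 2 then w else 1)" for j :: nat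
  show False
  proof (rule rootless_pattern_impossible[OF assms(2,4,3) p _ c roots])
    show "u j \<in> Ov" for j
      using w by (simp add: u_def)
    fix t assume "t \<in> range (poly p)"
    then have "t \<noteq> 0" using p(3) by auto
    then have "res (u 1) / t \<notin> A \<or> res (u 2) / t \<notin> A"
      using \<kappa>[of t] w by (simp add: u_def)
    then show "\<exists>j\<in>{1,2}. \<forall>\<zeta>. eval2 (\<lambda>i l. res (c i l)) N (res (u j) / t) \<zeta> \<noteq> 0"
      using rootless_off_A by blast
  qed
qed

end
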